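(* Let $n\ge1$, let $x$ be a vertex of $Q_n$ and $k_1,\dots,k_m<n$, and let $\mu = [x;\,k_1\dots k_ik_{i+1}\dots k_m]$. For some $i<m$, let $\nu = [x;\,k_1\dots k_{i-1}k_{i+1}k_ik_{i+2}\dots k_m]$ be the path obtained by swapping $k_i$ and $k_{i+1}$. (1) If $k_i\ne k_{i+1}$, then $p_\mu = -p_\nu$ in $C^\ast(Q_n)$. (2) If $k_i = k_{i+1}$, then $p_\mu = p_\nu$.
   Context: For $n\ge1$, identify integers $0\le i<2^n$ with their $n$-digit binary representations and let $i\#k$ be $i$ with its $k$-th digit flipped. The hypercube $Q_n$ has vertex classes $U_n$ (even number of $1$'s) and $V_n$ (odd number of $1$'s), with $i\in U_n$, $j\in V_n$ adjacent iff $j = i\#k$ for some $k<n$. $C^\ast(Q_n)$ is the universal unital C*-algebra generated by projections $p_x$ ($x\in U_n\cup V_n$) with $\sum_{u\in U_n}p_u = 1 = \sum_{v\in V_n}p_v$ and $p_up_v=0$ when $u\in U_n,v\in V_n$ are non-adjacent. For a vertex $x$ and indices $k_1,\dots,k_m<n$, $[x;\,k_1\dots k_m]$ denotes the path $x_1x_2\dots x_{m+1}$ with $x_1=x$ and $x_{r+1} = x_r\#k_r$; for a path $\mu = x_1\dots x_{m+1}$ one sets $p_\mu = p_{x_1}p_{x_2}\cdots p_{x_{m+1}}$. *)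

theory Defs
  imports "HOL-Analysis.Analysis"
begin

text \<open>The complex scalar multiplication
  is an extra operation compatible with the real one of the type class.\<close>

locale unital_cstar_algebra =
  fixes scaleC :: "complex \<Rightarrow> 'a::{real_normed_algebra_1, banach} \<Rightarrow> 'a"
    and star :: "'a \<Rightarrow> 'a"
  assumes scaleC_add_right: "scaleC c (x + y) = scaleC c x + scaleC c y"
    and scaleC_add_left: "scaleC (c + d) x = scaleC c x + scaleC d x"
    and scaleC_scaleC: "scaleC c (scaleC d x) = scaleC (c * d) x"
    and scaleC_one: "scaleC 1 x = x"
    and scaleC_of_real: "scaleC (of_real r) x = scaleR r x"
    and norm_scaleC: "norm (scaleC c x) = cmod c * norm x"
    and scaleC_mult_left: "scaleC c (x * y) = scaleC c x * y"
    and scaleC_mult_right: "scaleC c (x * y) = x * scaleC c y"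
    and star_add: "star (x + y) = star x + star y"
    and star_scaleC: "star (scaleC c x) = scaleC (cnj c) (star x)"
    and star_mult: "star (x * y) = star y * star x"
    and star_star: "star (star x) = x"
    and cstar_identity: "norm (star x * x) = (norm x)^2"

text \<open>Vertices of Q_n: naturals below 2^n; the k-th binary digit flipped.\<close>
definition flip :: "nat \<Rightarrow> nat \<Rightarrow> nat" (infixl "#\<^sub>f" 70) where
  "i #\<^sub>f k = flip_bit k i"

definition Ucls :: "nat \<Rightarrow> nat set" where
  "Ucls n = {i. i < 2^n \<and> even (card {k. k < n \<and> bit i k})}"

definition Vcls :: "nat \<Rightarrow> nat set" where
  "Vcls n = {i. i < 2^n \<and> odd (card {k. k < n \<and> bit i k})}"

definition adjacent :: "nat \<Rightarrow> nat \<Rightarrow> nat \<Rightarrow> bool" where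
  "adjacent n i j \<longleftrightarrow> (\<exists>k<n. j = i #\<^sub>f k)"

definition Qn_family :: "(complex \<Rightarrow> 'a::{real_normed_algebra_1, banach} \<Rightarrow> 'a) \<Rightarrow> ('a \<Rightarrow> 'a)
    \<Rightarrow> nat \<Rightarrow> (nat \<Rightarrow> 'a) \<Rightarrow> bool" where
  "Qn_family scaleC star n p \<longleftrightarrow>
     (\<forall>x \<in> Ucls n \<union> Vcls n. p x * p x = p x \<and> star (p x) = p x) \<and>
     (\<Sum>u\<in>Ucls n. p u) = 1 \<and> (\<Sum>v\<in>Vcls n. p v) = 1 \<and>
     (\<forall>u\<in>Ucls n. \<forall>v\<in>Vcls n. \<not> adjacent n u v \<longrightarrow> p u * p v = 0)"

fun path :: "nat \<Rightarrow> nat list \<Rightarrow> nat list" where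
  "path x [] = [x]"
| "path x (k # ks) = x # path (x #\<^sub>f k) ks"

definition p_path :: "(nat \<Rightarrow> 'a::monoid_mult) \<Rightarrow> nat list \<Rightarrow> 'a" where
  "p_path p \<mu> = prod_list (map p \<mu>)"

definition swap_at :: "nat \<Rightarrow> 'b list \<Rightarrow> 'b list" where
  "swap_at j ks = ks[j := ks ! Suc j, Suc j := ks ! j]"

end

theory Submission
  imports Defs
begin

(*
  Let y be the vertex reached before the two swapped steps k ~= l, and c = y #f k #f l.
  Then y and c are distinct vertices of the same class, so p y * p c = 0. Inserting the
  sum of all p v (which is 1 + 1) between p y and p c, only the common neighbours y #f k
  and y #f l of y and c contribute, which gives p y * p (y #f k) * p c =
  - p y * p (y #f l) * p c; a path product containing the two swapped steps factors
  through this identity.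

  That distinct projections summing to 1 are orthogonal follows from the C*-identity alone.
  Compressing by e = q a, the element d = e * q c * e / card (S - {a}) satisfies
  norm (e + d) <= 1 and norm (e - d) <= 1. The C*-identity then gives norm (e + z d) <= 1
  for complex |z| <= 1/2, and averaging (e + z d)^m over the (m+1)-st roots of unity
  isolates its linear term m z d (a discrete Cauchy estimate), so m * norm d <= 2 for all m
  and d = 0.
*)

section \<open>Binomial expansion and roots of unity\<close>

(* binomial_ring needs a commutative ring, but 1 commutes with everything. *)
lemma binomial_one_plus:
  fixes w :: "'a::ring_1"
  shows "(1 + w) ^ m = (\<Sum>j\<le>m. of_nat (m choose j) * w ^ j)"
proof (induction m)
  case 0
  then show ?case by simp
next
  case (Suc m)
  define S where "S = (\<Sum>j\<le>m. of_nat (m choose j) * w ^ j)"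
  have shift: "S = 1 + (\<Sum>j\<le>m. of_nat (m choose Suc j) * w ^ Suc j)"
    unfolding S_def by (subst sum.atMost_shift) (simp_all add: lessThan_Suc_atMost[symmetric] binomial_eq_0)
  have left: "w * S = (\<Sum>j\<le>m. of_nat (m choose j) * w ^ Suc j)"
    unfolding S_def sum_distrib_left by (simp add: mult_of_nat_commute mult.assoc)
  have "(\<Sum>j\<le>Suc m. of_nat (Suc m choose j) * w ^ j)
      = 1 + (\<Sum>j\<le>m. of_nat (m choose j) * w ^ Suc j) + (\<Sum>j\<le>m. of_nat (m choose Suc j) * w ^ Suc j)"
    by (subst sum.atMost_Suc_shift) (simp add: distrib_right sum.distrib add.assoc del: sum.atMost_Suc)
  also have "\<dots> = (1 + w) * S"
    using shift left by (simp add: distrib_right algebra_simps)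
  finally show ?case using Suc by (simp add: S_def)
qed

lemma sum_root_unity_powers:
  fixes N t :: nat
  assumes "N \<ge> 1"
  defines "\<omega> \<equiv> exp (2 * of_real pi * \<i> / of_nat N)"
  shows "(\<Sum>k<N. (\<omega> ^ t) ^ k) = (if N dvd t then of_nat N else 0)"
proof -
  have unit: "\<omega> ^ s = 1 \<longleftrightarrow> N dvd s" for s
    using complex_root_unity_eq_1[OF assms(1), of s]
    unfolding \<omega>_def exp_of_nat_mult[symmetric] by (simp add: field_simps)
  have "(\<omega> ^ t) ^ N = 1"
    unfolding power_mult[symmetric] unit by simp
  with sum_gp_strict[of "\<omega> ^ t" N] show ?thesis
    by (simp add: unit)
qed

lemma sum_root_unity_linear_coefficient:
  fixes m j :: nat
  assumes m: "m \<ge> 1" and j: "j \<le> m"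
  defines "\<omega> \<equiv> exp (2 * of_real pi * \<i> / of_nat (Suc m))"
  shows "(\<Sum>k<Suc m. \<omega> ^ (k * m) * (\<omega> ^ k) ^ j) = (if j = 1 then of_nat (Suc m) else 0)"
proof -
  have "Suc m dvd m + j \<longleftrightarrow> j = 1"
  proof
    assume dvd: "Suc m dvd m + j"
    then have "Suc m \<le> m + j"
      using m by (intro dvd_imp_le) auto
    moreover from this have "Suc m dvd j - 1"
      using dvd_diff_nat[OF dvd dvd_refl] by (simp add: diff_Suc)
    ultimately show "j = 1"
      using j nat_dvd_not_less[of "j - 1" "Suc m"] by linarith
  qed simp
  moreover have "\<omega> ^ (k * m) * (\<omega> ^ k) ^ j = (\<omega> ^ (m + j)) ^ k" for k
    by (simp add: algebra_simps flip: power_mult power_add)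
  ultimately show ?thesis
    using sum_root_unity_powers[of "Suc m" "m + j", folded \<omega>_def] by simp
qed

section \<open>Projections summing to one are orthogonal\<close>

lemma norm_mult_le_one:
  fixes x y :: "'a::real_normed_algebra"
  assumes "norm x \<le> 1" "norm y \<le> 1"
  shows "norm (x * y) \<le> 1"
  using norm_mult_ineq[of x y] mult_le_one[OF assms(1) _ assms(2)] by simp

lemma norm_corner_quadratic_le_one:
  fixes e D :: "'a::real_normed_algebra"
  assumes e: "e * e = e" and D: "e * D = D" "D * e = D"
    and pos: "norm (e + D) \<le> 1" and neg: "norm (e - D) \<le> 1"
    and a: "0 \<le> a" "a \<le> 1/2" and r: "0 \<le> r" "r \<le> 1/4"
  shows "norm (e + (2 * a) *\<^sub>R D + r *\<^sub>R (D * D)) \<le> 1"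
proof -
  have sq_pos: "(e + D) * (e + D) = e + 2 *\<^sub>R D + D * D"
    and sq_neg: "(e - D) * (e - D) = e - 2 *\<^sub>R D + D * D"
    and prod: "(e - D) * (e + D) = e - D * D"
    using e D by (simp_all add: algebra_simps scaleR_2)
  have n_sq: "norm (e + 2 *\<^sub>R D + D * D) \<le> 1"
    using norm_mult_le_one[OF pos pos] by (simp add: sq_pos)
  have n_minus: "norm (e - D * D) \<le> 1"
    using norm_mult_le_one[OF neg pos] by (simp add: prod)
  have "(e + D) * (e + D) + (e - D) * (e - D) = 2 *\<^sub>R (e + D * D)"
    unfolding sq_pos sq_neg by (simp add: algebra_simps scaleR_2)
  then have "e + D * D = (1/2) *\<^sub>R ((e + D) * (e + D) + (e - D) * (e - D))"
    by simp
  also have "norm \<dots> \<le> (1/2) * (1 + 1)"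
    using norm_triangle_le[OF add_mono[OF norm_mult_le_one[OF pos pos] norm_mult_le_one[OF neg neg]]]
    by simp
  finally have n_plus: "norm (e + D * D) \<le> 1" by simp
  define b1 where "b1 = (1 - 2 * a + r) / 2"
  define b2 where "b2 = (1 - r) / 2"
  have b: "0 \<le> b1" "0 \<le> b2" "a + b1 + b2 = 1"
    using a r by (auto simp: b1_def b2_def field_simps)
  have "e + (2 * a) *\<^sub>R D + r *\<^sub>R (D * D)
      = a *\<^sub>R (e + 2 *\<^sub>R D + D * D) + b1 *\<^sub>R (e + D * D) + b2 *\<^sub>R (e - D * D)"
  proof -
    have "a *\<^sub>R (e + 2 *\<^sub>R D + D * D) + b1 *\<^sub>R (e + D * D) + b2 *\<^sub>R (e - D * D)
        = (a + b1 + b2) *\<^sub>R e + (2 * a) *\<^sub>R D + (a + b1 - b2) *\<^sub>R (D * D)"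
      by (simp add: algebra_simps)
    also have "a + b1 - b2 = r" by (simp add: b1_def b2_def field_simps)
    finally show ?thesis using b(3) by simp
  qed
  also have "norm \<dots> \<le> a * 1 + b1 * 1 + b2 * 1"
    using a b n_sq n_plus n_minus
    by (intro norm_triangle_le add_mono order_trans[OF norm_triangle_ineq]) (auto intro: mult_left_le)
  finally show ?thesis using b(3) by simp
qed

context unital_cstar_algebra
begin

lemma scaleC_zero_left [simp]: "scaleC 0 x = 0"
  using scaleC_add_left[of 0 0 x] by simp

lemma scaleC_zero_right [simp]: "scaleC c 0 = 0"
  using scaleC_add_right[of c 0 0] by simp

lemma star_zero [simp]: "star 0 = 0"
  using star_add[of 0 0] by simp

lemma star_minus: "star (- x) = - star x"
  using star_add[of x "- x"] by (simp add: eq_neg_iff_add_eq_0 add.commute)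

lemma star_diff: "star (x - y) = star x - star y"
  using star_add[of x "- y"] by (simp add: star_minus)

lemma star_one [simp]: "star 1 = 1"
  using star_mult[of "star 1" 1] by (simp add: star_star)

lemma star_scaleR: "star (r *\<^sub>R x) = r *\<^sub>R star x"
  using star_scaleC[of "of_real r" x] by (simp add: scaleC_of_real)

lemma scaleC_sum_left: "scaleC (\<Sum>i\<in>A. f i) x = (\<Sum>i\<in>A. scaleC (f i) x)"
  by (induction A rule: infinite_finite_induct) (simp_all add: scaleC_add_left)

lemma scaleC_sum_right: "scaleC c (\<Sum>i\<in>A. f i) = (\<Sum>i\<in>A. scaleC c (f i))"
  by (induction A rule: infinite_finite_induct) (simp_all add: scaleC_add_right)

lemma scaleC_of_nat: "scaleC (of_nat k) x = of_nat k * x"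
  using scaleC_of_real[of "real k" x] by (simp add: scaleR_conv_of_real)

lemma mult_scaleC: "scaleC a x * scaleC b y = scaleC (a * b) (x * y)"
  by (simp add: scaleC_scaleC mult.commute flip: scaleC_mult_left scaleC_mult_right)

lemma scaleC_power: "scaleC a x ^ j = scaleC (a ^ j) (x ^ j)"
  by (induction j) (simp_all add: scaleC_one mult_scaleC)

lemma norm_projection_le_one:
  assumes "q * q = q" "star q = q"
  shows "norm q \<le> 1"
proof -
  have "norm q = norm q ^ 2"
    using cstar_identity[of q] assms by simp
  then show ?thesis
    by (cases "norm q = 0") (auto simp: power2_eq_square)
qed

lemma star_mult_self_eq_0D:
  assumes "star x * x = 0"
  shows "x = 0"
  using cstar_identity[of x] assms by simp

lemma norm_corner_disk_le_one:
  assumes e: "e * e = e" "star e = e" and d: "star d = d" "e * d = d" "d * e = d"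
    and pos: "norm (e + d) \<le> 1" and neg: "norm (e - d) \<le> 1" and z: "cmod z \<le> 1/2"
  shows "norm (e + scaleC z d) \<le> 1"
proof -
  define y where "y = e + scaleC z d"
  have "star y = e + scaleC (cnj z) d"
    using e d by (simp add: y_def star_add star_scaleC)
  then have "star y * y = e * e + e * scaleC z d + scaleC (cnj z) d * e + scaleC (cnj z) d * scaleC z d"
    by (simp add: y_def algebra_simps)
  also have "\<dots> = e * e + scaleC z (e * d) + scaleC (cnj z) (d * e) + scaleC (cnj z * z) (d * d)"
    by (simp add: mult_scaleC scaleC_scaleC mult.commute flip: scaleC_mult_left scaleC_mult_right)
  also have "\<dots> = e + scaleC (z + cnj z) d + scaleC (z * cnj z) (d * d)"
    using e d by (simp add: scaleC_add_left mult.commute)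
  also have "\<dots> = e + (2 * Re z) *\<^sub>R d + (cmod z ^ 2) *\<^sub>R (d * d)"
    by (simp only: complex_add_cnj scaleC_of_real flip: complex_norm_square)
  finally have star_y: "star y * y = e + (2 * Re z) *\<^sub>R d + (cmod z ^ 2) *\<^sub>R (d * d)" .
  have Re_z: "\<bar>Re z\<bar> \<le> 1/2"
    using abs_Re_le_cmod[of z] z by linarith
  have norm_z: "0 \<le> cmod z ^ 2" "cmod z ^ 2 \<le> 1/4"
    using power_mono[OF z, of 2] by (auto simp: power2_eq_square)
  have "norm (star y * y) \<le> 1"
  proof (cases "Re z \<ge> 0")
    case True
    then show ?thesis
      using norm_corner_quadratic_le_one[OF e(1) d(2,3) pos neg, of "Re z" "cmod z ^ 2"] Re_z norm_z
      by (simp add: star_y)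
  next
    case False
    have "e * - d = - d" "- d * e = - d" "norm (e + - d) \<le> 1" "norm (e - - d) \<le> 1"
      using d pos neg by simp_all
    then show ?thesis
      using norm_corner_quadratic_le_one[OF e(1), of "- d" "- Re z" "cmod z ^ 2"] False Re_z norm_z
      by (simp add: star_y)
  qed
  then have "norm y ^ 2 \<le> 1"
    using cstar_identity[of y] by simp
  then show ?thesis
    by (simp add: y_def power_le_one_iff)
qed

lemma corner_power_expansion:
  assumes e: "e * e = e" and d: "e * d = d" "d * e = d" and m: "m \<ge> 1"
  shows "(e + scaleC z d) ^ m = e * (\<Sum>j\<le>m. scaleC (of_nat (m choose j) * z ^ j) (d ^ j))"
proof -
  define w where "w = scaleC z d"
  have w: "e * w = w" "w * e = w"
    using d by (simp_all add: w_def flip: scaleC_mult_left scaleC_mult_right)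
  have "(e + w) ^ Suc k = e * (1 + w) ^ Suc k" for k
  proof (induction k)
    case 0
    then show ?case using w by (simp add: algebra_simps)
  next
    case (Suc k)
    have "(e + w) * e = e * (1 + w)"
      using e w by (simp add: algebra_simps)
    with Suc show ?case
      by (simp add: mult.assoc[symmetric])
  qed
  then have "(e + w) ^ m = e * (1 + w) ^ m"
    using m by (metis Suc_le_D One_nat_def)
  then show ?thesis
    by (simp add: w_def binomial_one_plus scaleC_power scaleC_scaleC flip: scaleC_of_nat)
qed

(* Since \<omega> ^ (k * m) is the conjugate of \<omega> ^ k, the average picks out the linear coefficient. *)
lemma corner_power_average:
  assumes e: "e * e = e" and d: "e * d = d" "d * e = d" and m: "m \<ge> 1"
  defines "\<omega> \<equiv> exp (2 * of_real pi * \<i> / of_nat (Suc m))"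
  shows "(\<Sum>k<Suc m. scaleC (\<omega> ^ (k * m)) ((e + scaleC (c * \<omega> ^ k) d) ^ m))
       = scaleC (of_nat (Suc m * m) * c) d"
proof -
  have coefficient: "(\<Sum>k<Suc m. \<omega> ^ (k * m) * (of_nat (m choose j) * (c * \<omega> ^ k) ^ j))
      = (if j = 1 then of_nat (Suc m * m) * c else 0)" if "j \<le> m" for j
  proof -
    have "(\<Sum>k<Suc m. \<omega> ^ (k * m) * (of_nat (m choose j) * (c * \<omega> ^ k) ^ j))
        = of_nat (m choose j) * c ^ j * (\<Sum>k<Suc m. \<omega> ^ (k * m) * (\<omega> ^ k) ^ j)"
      by (simp add: sum_distrib_left power_mult_distrib algebra_simps)
    also have "\<dots> = of_nat (m choose j) * c ^ j * (if j = 1 then of_nat (Suc m) else 0)"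
      by (simp only: sum_root_unity_linear_coefficient[OF m that, folded \<omega>_def])
    also have "\<dots> = (if j = 1 then of_nat (Suc m * m) * c else 0)"
      by (simp add: algebra_simps)
    finally show ?thesis .
  qed
  have "scaleC (\<omega> ^ (k * m)) ((e + scaleC (c * \<omega> ^ k) d) ^ m)
      = e * (\<Sum>j\<le>m. scaleC (\<omega> ^ (k * m) * (of_nat (m choose j) * (c * \<omega> ^ k) ^ j)) (d ^ j))" for k
    by (simp add: corner_power_expansion[OF e d m] scaleC_mult_right scaleC_sum_right scaleC_scaleC)
  then have "(\<Sum>k<Suc m. scaleC (\<omega> ^ (k * m)) ((e + scaleC (c * \<omega> ^ k) d) ^ m))
      = (\<Sum>k<Suc m. e * (\<Sum>j\<le>m. scaleC (\<omega> ^ (k * m) * (of_nat (m choose j) * (c * \<omega> ^ k) ^ j)) (d ^ j)))"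
    by (simp only:)
  also have "\<dots> = e * (\<Sum>j\<le>m. scaleC (\<Sum>k<Suc m. \<omega> ^ (k * m) * (of_nat (m choose j) * (c * \<omega> ^ k) ^ j)) (d ^ j))"
    unfolding scaleC_sum_left sum_distrib_left[symmetric] by (subst sum.swap) (rule refl)
  also have "\<dots> = e * (\<Sum>j\<le>m. if j = 1 then scaleC (of_nat (Suc m * m) * c) d else 0)"
    by (intro arg_cong[where f = "\<lambda>x. e * x"] sum.cong refl) (simp add: coefficient del: sum.lessThan_Suc)
  also have "\<dots> = scaleC (of_nat (Suc m * m) * c) d"
    using m d by (simp add: flip: scaleC_mult_right)
  finally show ?thesis .
qed

lemma corner_linear_bound:
  assumes e: "e * e = e" "star e = e" and d: "star d = d" "e * d = d" "d * e = d"
    and pos: "norm (e + d) \<le> 1" and neg: "norm (e - d) \<le> 1" and m: "m \<ge> 1"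
  shows "real m * norm d \<le> 2"
proof -
  define \<omega> where "\<omega> = exp (2 * of_real pi * \<i> / of_nat (Suc m))"
  define F where "F k = scaleC (\<omega> ^ (k * m)) ((e + scaleC (1/2 * \<omega> ^ k) d) ^ m)" for k
  have norm_\<omega>: "cmod (\<omega> ^ k) = 1" for k
    by (simp add: \<omega>_def norm_power norm_exp_eq_Re)
  have "norm (F k) \<le> 1" for k
  proof -
    have "norm (e + scaleC (1/2 * \<omega> ^ k) d) \<le> 1"
      by (rule norm_corner_disk_le_one[OF e d pos neg]) (simp add: norm_mult norm_\<omega>)
    then show ?thesis
      by (simp add: F_def norm_scaleC norm_\<omega> power_le_one order_trans[OF norm_power_ineq])
  qed
  then have "norm (\<Sum>k<Suc m. F k) \<le> (\<Sum>k<Suc m. 1)"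
    by (intro order_trans[OF norm_sum] sum_mono)
  then have "norm (scaleC (of_nat (Suc m * m) * (1/2)) d) \<le> Suc m"
    unfolding F_def corner_power_average[OF e(1) d(2,3) m, folded \<omega>_def] by simp
  then have "real (Suc m) * (real m * norm d) \<le> real (Suc m) * 2"
    unfolding norm_scaleC norm_mult norm_of_nat by (simp add: field_simps)
  then show ?thesis
    by (rule mult_left_le_imp_le) simp
qed

lemma self_adjoint_corner_eq_0:
  assumes e: "e * e = e" "star e = e" and d: "star d = d" "e * d = d" "d * e = d"
    and pos: "norm (e + d) \<le> 1" and neg: "norm (e - d) \<le> 1"
  shows "d = 0"
proof (rule ccontr)
  assume "d \<noteq> 0"
  then have "norm d > 0" by simp
  obtain m :: nat where "2 / norm d < m"
    using reals_Archimedean2 by blast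
  with \<open>norm d > 0\<close> have "2 < real m * norm d"
    by (simp add: field_simps)
  moreover from this have "m \<ge> 1"
    by (cases m) auto
  ultimately show False
    using corner_linear_bound[OF e d pos neg] by fastforce
qed

lemma corner_summand_eq_0:
  fixes X :: "'b \<Rightarrow> 'a"
  assumes e: "e * e = e" "star e = e"
    and T: "finite T" "c \<in> T" "(\<Sum>s\<in>T. X s) = 0" "\<forall>s\<in>T. norm (e - X s) \<le> 1"
    and X: "star (X c) = X c" "e * X c = X c" "X c * e = X c"
  shows "X c = 0"
proof -
  define M where "M = card T"
  have M: "M \<ge> 1"
    using T(1,2) by (auto simp: M_def Suc_le_eq card_gt_0_iff)
  define t where "t = 1 / real M"
  have t: "0 < t" "t \<le> 1" "real M * t = 1"
    using M by (auto simp: t_def)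
  define d where "d = t *\<^sub>R X c"
  have norm_e: "norm e \<le> 1"
    by (rule norm_projection_le_one[OF e])
  \<comment> \<open>e + d is the average of e and the elements e - X s, s \<noteq> c\<close>
  have others: "(\<Sum>s\<in>T - {c}. e - X s) = real (M - 1) *\<^sub>R e + X c"
    using T sum.remove[OF T(1,2), of X]
    by (simp add: sum_subtractf M_def card_Diff_singleton scaleR_conv_of_real add_eq_0_iff)
  have "norm (\<Sum>s\<in>T - {c}. e - X s) \<le> (\<Sum>s\<in>T - {c}. 1)"
    using T(4) by (intro order_trans[OF norm_sum] sum_mono) auto
  then have "norm (e + (\<Sum>s\<in>T - {c}. e - X s)) \<le> 1 + real (M - 1)"
    using norm_e T(1,2) by (intro norm_triangle_le add_mono) (auto simp: M_def card_Diff_singleton)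
  moreover have "e + (\<Sum>s\<in>T - {c}. e - X s) = real M *\<^sub>R (e + d)"
    using M t(3) by (simp add: others d_def scaleR_add_right of_nat_diff algebra_simps)
  ultimately have "real M * norm (e + d) \<le> real M * 1"
    using M by (simp add: of_nat_diff)
  then have pos: "norm (e + d) \<le> 1"
    using M by (simp only: mult_le_cancel_left_pos)
  have "norm (e - X c) \<le> 1"
    using T(2,4) by blast
  have "norm (e - d) = norm ((1 - t) *\<^sub>R e + t *\<^sub>R (e - X c))"
    by (simp add: d_def algebra_simps)
  also have "\<dots> \<le> (1 - t) * 1 + t * 1"
    using t norm_e \<open>norm (e - X c) \<le> 1\<close>
    by (intro norm_triangle_le add_mono order_trans[OF norm_triangle_ineq]) (auto intro: mult_left_le)
  finally have neg: "norm (e - d) \<le> 1"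
    by simp
  have "d = 0"
    by (rule self_adjoint_corner_eq_0[OF e _ _ _ pos neg]) (simp_all add: d_def X star_scaleR)
  with t show ?thesis
    by (simp add: d_def)
qed

lemma norm_corner_complement_le_one:
  assumes e: "e * e = e" "star e = e" and q: "q * q = q" "star q = q"
  shows "norm (e - e * q * e) \<le> 1"
proof -
  have "star (1 - q) = 1 - q" "(1 - q) * (1 - q) = 1 - q"
    using q by (auto simp: star_diff algebra_simps)
  then have "norm (1 - q) \<le> 1"
    by (intro norm_projection_le_one)
  moreover have "norm e \<le> 1"
    by (rule norm_projection_le_one[OF e])
  moreover have "e - e * q * e = e * (1 - q) * e"
    using e by (simp add: algebra_simps)
  ultimately show ?thesis
    by (simp add: norm_mult_le_one)
qed

lemma projections_sum_one_orthogonal: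
  fixes q :: "'b \<Rightarrow> 'a"
  assumes S: "finite S" "\<forall>s\<in>S. q s * q s = q s \<and> star (q s) = q s" "(\<Sum>s\<in>S. q s) = 1"
    and a: "a \<in> S" and c: "c \<in> S" "a \<noteq> c"
  shows "q a * q c = 0"
proof -
  define e where "e = q a"
  have e: "e * e = e" "star e = e" and qc: "q c * q c = q c" "star (q c) = q c"
    using S(2) a c by (auto simp: e_def)
  have "e * q a * e + (\<Sum>s\<in>S - {a}. e * q s * e) = e * (\<Sum>s\<in>S. q s) * e"
    using sum.remove[OF S(1) a, of "\<lambda>s. e * q s * e"] by (simp add: sum_distrib_left sum_distrib_right)
  then have sum_zero: "(\<Sum>s\<in>S - {a}. e * q s * e) = 0"
    using S(3) e by (simp add: e_def)
  have "norm (e - e * q s * e) \<le> 1" if "s \<in> S" for s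
    using S(2) that by (intro norm_corner_complement_le_one[OF e]) auto
  moreover have "star (e * q c * e) = e * q c * e"
    using e qc by (simp add: star_mult mult.assoc)
  moreover have "e * (e * q c * e) = e * q c * e" "e * q c * e * e = e * q c * e"
    using e by (simp_all add: mult.assoc[symmetric]) (simp add: mult.assoc)
  ultimately have "e * q c * e = 0"
    using S(1) c sum_zero
    by (intro corner_summand_eq_0[OF e, where X = "\<lambda>s. e * q s * e" and T = "S - {a}"]) simp_all
  moreover have "star (q c * e) * (q c * e) = e * (q c * q c) * e"
    using e(2) qc(2) by (simp add: star_mult mult.assoc)
  ultimately have "star (q c * e) * (q c * e) = 0"
    using qc by simp
  then have "q c * e = 0"
    by (rule star_mult_self_eq_0D)
  then show ?thesis
    using e qc star_mult[of "q c" e] by (simp add: e_def)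
qed

end

section \<open>The hypercube and its paths\<close>

lemma flip_less_pow2: "i < 2 ^ n \<Longrightarrow> k < n \<Longrightarrow> i #\<^sub>f k < (2::nat) ^ n"
  unfolding flip_def using take_bit_flip_bit_eq[of n k i]
  by (simp add: take_bit_nat_eq_self_iff[symmetric])

lemma bit_flip_iff: "bit (x #\<^sub>f k) j \<longleftrightarrow> (k = j \<longleftrightarrow> \<not> bit x j)"
  unfolding flip_def by (simp add: bit_flip_bit_iff)

lemma flip_flip [simp]: "x #\<^sub>f k #\<^sub>f k = x"
  by (rule bit_eqI) (auto simp: bit_flip_iff)

lemma flip_commute: "x #\<^sub>f k #\<^sub>f l = x #\<^sub>f l #\<^sub>f k"
  by (rule bit_eqI) (auto simp: bit_flip_iff)

lemma flip_eq_flip_iff: "x #\<^sub>f k = x #\<^sub>f l \<longleftrightarrow> k = l"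
  by (metis bit_flip_iff)

lemma flip_flip_neq_flip: "k \<noteq> l \<Longrightarrow> x #\<^sub>f k #\<^sub>f l \<noteq> x #\<^sub>f i"
  by (metis bit_flip_iff)

lemma flip_flip_neq: "k \<noteq> l \<Longrightarrow> x #\<^sub>f k #\<^sub>f l \<noteq> x"
  by (metis bit_flip_iff)

lemma flip_flip_eq_flip_flipD:
  assumes "x #\<^sub>f k #\<^sub>f l = x #\<^sub>f i #\<^sub>f i'" "k \<noteq> l"
  shows "i = k \<or> i = l"
  by (metis assms bit_flip_iff)

lemma adjacent_sym: "adjacent n u v \<longleftrightarrow> adjacent n v u"
  unfolding adjacent_def by (metis flip_flip)

lemma Ucls_Un_Vcls: "Ucls n \<union> Vcls n = {..<2 ^ n}"
  by (auto simp: Ucls_def Vcls_def)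

lemma Ucls_Int_Vcls: "Ucls n \<inter> Vcls n = {}"
  by (auto simp: Ucls_def Vcls_def)

lemma finite_Ucls [simp]: "finite (Ucls n)" and finite_Vcls [simp]: "finite (Vcls n)"
  by (auto simp: Ucls_def Vcls_def)

lemma path_append: "path x (ks @ ls) = butlast (path x ks) @ path (foldl (#\<^sub>f) x ks) ls"
proof (induction ks arbitrary: x)
  case Nil
  then show ?case by simp
next
  case (Cons k ks)
  have "path (x #\<^sub>f k) ks \<noteq> []"
    by (cases ks) simp_all
  with Cons show ?case by simp
qed

lemma foldl_flip_less_pow2: "x < 2 ^ n \<Longrightarrow> \<forall>k\<in>set ks. k < n \<Longrightarrow> foldl (#\<^sub>f) x ks < (2::nat) ^ n"
  by (induction ks arbitrary: x) (simp_all add: flip_less_pow2)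

lemma p_path_append: "p_path p (xs @ ys) = p_path p xs * p_path p ys"
  by (simp add: p_path_def)

lemma p_path_Cons: "p_path p (x # xs) = p x * p_path p xs"
  by (simp add: p_path_def)

lemma p_path_path: "p_path p (path x ks) = p x * p_path p (tl (path x ks))"
  by (cases ks) (simp_all add: p_path_def)

lemma swap_at_decompose:
  assumes "Suc j < length ks"
  obtains pre post where "ks = pre @ ks ! j # ks ! Suc j # post"
    and "swap_at j ks = pre @ ks ! Suc j # ks ! j # post"
proof
  show ks: "ks = take j ks @ ks ! j # ks ! Suc j # drop (Suc (Suc j)) ks"
    using assms by (simp add: Cons_nth_drop_Suc)
  have "length (take j ks) = j"
    using assms by simp
  then show "swap_at j ks = take j ks @ ks ! Suc j # ks ! j # drop (Suc (Suc j)) ks"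
    unfolding swap_at_def by (subst (1 2) ks) (simp add: list_update_append)
qed

section \<open>Products of the generating projections\<close>

context unital_cstar_algebra
begin

lemma Qn_vertex_mult_eq_0:
  assumes Q: "Qn_family scaleC star n p"
    and uv: "u < 2 ^ n" "v < 2 ^ n" "u \<noteq> v" "\<not> adjacent n u v"
  shows "p u * p v = 0"
proof -
  have proj: "\<forall>x\<in>Ucls n \<union> Vcls n. p x * p x = p x \<and> star (p x) = p x"
    and sums: "(\<Sum>x\<in>Ucls n. p x) = 1" "(\<Sum>x\<in>Vcls n. p x) = 1"
    and nonadj: "\<forall>x\<in>Ucls n. \<forall>y\<in>Vcls n. \<not> adjacent n x y \<longrightarrow> p x * p y = 0"
    using Q by (auto simp: Qn_family_def)
  have classes: "x \<in> Ucls n \<or> x \<in> Vcls n" if "x < 2 ^ n" for x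
    using that Ucls_Un_Vcls by blast
  consider "u \<in> Ucls n" "v \<in> Ucls n" | "u \<in> Vcls n" "v \<in> Vcls n"
    | "u \<in> Ucls n" "v \<in> Vcls n" | "u \<in> Vcls n" "v \<in> Ucls n"
    using classes uv(1,2) by blast
  then show ?thesis
  proof cases
    case 1
    then show ?thesis
      using proj sums(1) uv(3) by (intro projections_sum_one_orthogonal[of "Ucls n"]) auto
  next
    case 2
    then show ?thesis
      using proj sums(2) uv(3) by (intro projections_sum_one_orthogonal[of "Vcls n"]) auto
  next
    case 3
    then show ?thesis
      using nonadj uv(4) by blast
  next
    case 4
    then have "p v * p u = 0"
      using nonadj uv(4) adjacent_sym by blast
    then have "star (p v * p u) = 0"
      by simp
    with 4 proj show ?thesis
      by (simp add: star_mult)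
  qed
qed

lemma Qn_projection:
  assumes "Qn_family scaleC star n p" "x < 2 ^ n"
  shows "p x * p x = p x"
  using assms Ucls_Un_Vcls by (auto simp: Qn_family_def)

lemma Qn_sum_all_vertices:
  assumes "Qn_family scaleC star n p"
  shows "(\<Sum>v<2 ^ n. p v) = 1 + 1"
  using assms sum.union_disjoint[of "Ucls n" "Vcls n" p] Ucls_Int_Vcls
  by (simp add: Qn_family_def flip: Ucls_Un_Vcls)

lemma Qn_distance_two_mult_eq_0:
  assumes Q: "Qn_family scaleC star n p"
    and y: "y < 2 ^ n" and kl: "k < n" "l < n" "k \<noteq> l"
  shows "p y * p (y #\<^sub>f k #\<^sub>f l) = 0"
proof (rule Qn_vertex_mult_eq_0[OF Q y])
  show "y #\<^sub>f k #\<^sub>f l < 2 ^ n"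
    using y kl by (simp add: flip_less_pow2)
  show "y \<noteq> y #\<^sub>f k #\<^sub>f l" "\<not> adjacent n y (y #\<^sub>f k #\<^sub>f l)"
    using flip_flip_neq[OF kl(3), of y] flip_flip_neq_flip[OF kl(3), of y]
    by (auto simp: adjacent_def)
qed

lemma Qn_mult_non_common_neighbour_eq_0:
  assumes Q: "Qn_family scaleC star n p"
    and y: "y < 2 ^ n" and kl: "k < n" "l < n" "k \<noteq> l"
    and v: "v < 2 ^ n" "v \<notin> {y #\<^sub>f k, y #\<^sub>f l}"
  shows "p y * p v * p (y #\<^sub>f k #\<^sub>f l) = 0"
proof -
  define c where "c = y #\<^sub>f k #\<^sub>f l"
  have c: "c < 2 ^ n"
    using y kl by (simp add: c_def flip_less_pow2)
  have yc: "p y * p c = 0"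
    unfolding c_def by (rule Qn_distance_two_mult_eq_0[OF Q y kl])
  consider "v = y" | "v = c" | "v \<noteq> y" "\<not> adjacent n y v" | "v \<noteq> c" "\<not> adjacent n v c"
    | i i' where "v = y #\<^sub>f i" "c = v #\<^sub>f i'"
    unfolding adjacent_def by blast
  then show ?thesis
  proof cases
    case 1
    then show ?thesis using Qn_projection[OF Q y] yc by (simp add: c_def)
  next
    case 2
    then show ?thesis using Qn_projection[OF Q c] yc by (simp add: c_def mult.assoc)
  next
    case 3
    then show ?thesis using Qn_vertex_mult_eq_0[OF Q y v(1)] by simp
  next
    case 4
    then show ?thesis using Qn_vertex_mult_eq_0[OF Q v(1) c] by (simp add: c_def mult.assoc)
  next
    case 5
    then have "i = k \<or> i = l"
      using flip_flip_eq_flip_flipD[OF _ kl(3)] by (simp add: c_def)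
    with 5 v(2) show ?thesis by auto
  qed
qed

lemma Qn_swap_two_steps:
  assumes Q: "Qn_family scaleC star n p"
    and y: "y < 2 ^ n" and kl: "k < n" "l < n" "k \<noteq> l"
  shows "p y * p (y #\<^sub>f k) * p (y #\<^sub>f k #\<^sub>f l) = - (p y * p (y #\<^sub>f l) * p (y #\<^sub>f k #\<^sub>f l))"
proof -
  define c where "c = y #\<^sub>f k #\<^sub>f l"
  have "p y * p (y #\<^sub>f k) * p c + p y * p (y #\<^sub>f l) * p c = (\<Sum>v\<in>{y #\<^sub>f k, y #\<^sub>f l}. p y * p v * p c)"
    using kl(3) by (simp add: flip_eq_flip_iff)
  also have "\<dots> = (\<Sum>v<2 ^ n. p y * p v * p c)"
    using y kl Qn_mult_non_common_neighbour_eq_0[OF Q y kl]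
    by (intro sum.mono_neutral_left) (auto simp: c_def flip_less_pow2)
  also have "\<dots> = p y * (\<Sum>v<2 ^ n. p v) * p c"
    by (simp add: sum_distrib_left sum_distrib_right)
  also have "\<dots> = p y * p c + p y * p c"
    by (simp only: Qn_sum_all_vertices[OF Q] distrib_left distrib_right mult_1_left mult_1_right)
  finally show ?thesis
    using Qn_distance_two_mult_eq_0[OF Q y kl] by (simp add: c_def add_eq_0_iff)
qed

lemma p_path_swap_first_steps:
  assumes Q: "Qn_family scaleC star n p"
    and y: "y < 2 ^ n" and kl: "k < n" "l < n" "k \<noteq> l"
  shows "p_path p (path y (k # l # ks)) = - p_path p (path y (l # k # ks))"
proof -
  define c where "c = y #\<^sub>f k #\<^sub>f l"
  define R where "R = p_path p (tl (path c ks))"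
  have c: "p_path p (path c ks) = p c * R"
    unfolding R_def by (rule p_path_path)
  have "p_path p (path y (k # l # ks)) = p y * p (y #\<^sub>f k) * p c * R"
    using c by (simp add: p_path_Cons c_def mult.assoc)
  also have "\<dots> = - (p y * p (y #\<^sub>f l) * p c * R)"
    using Qn_swap_two_steps[OF Q y kl] by (simp add: c_def)
  also have "p y * p (y #\<^sub>f l) * p c * R = p_path p (path y (l # k # ks))"
    using c by (simp add: p_path_Cons c_def flip_commute[of y k l] mult.assoc)
  finally show ?thesis .
qed

end

theorem lemma3p3:
  fixes scaleC :: "complex \<Rightarrow> 'a::{real_normed_algebra_1, banach} \<Rightarrow> 'a"
    and star :: "'a \<Rightarrow> 'a" and p :: "nat \<Rightarrow> 'a"
    and n x j :: nat and ks :: "nat list"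
  assumes "unital_cstar_algebra scaleC star"
    and "Qn_family scaleC star n p"
    and "n \<ge> 1"
    and "x < 2^n"
    and "\<forall>k\<in>set ks. k < n"
    and "Suc j < length ks"
  shows "(ks ! j \<noteq> ks ! Suc j \<longrightarrow>
            p_path p (path x ks) = - p_path p (path x (swap_at j ks)))
       \<and> (ks ! j = ks ! Suc j \<longrightarrow>
            p_path p (path x ks) = p_path p (path x (swap_at j ks)))"
proof (intro conjI impI)
  assume "ks ! j = ks ! Suc j"
  then have "swap_at j ks = ks"
    unfolding swap_at_def by (metis list_update_id)
  then show "p_path p (path x ks) = p_path p (path x (swap_at j ks))"
    by simp
next
  assume ne: "ks ! j \<noteq> ks ! Suc j"
  obtain pre post where ks: "ks = pre @ ks ! j # ks ! Suc j # post"
    and swapped: "swap_at j ks = pre @ ks ! Suc j # ks ! j # post"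
    using swap_at_decompose[OF assms(6)] .
  define y where "y = foldl (#\<^sub>f) x pre"
  have "set pre \<subseteq> set ks"
    using arg_cong[OF ks, of set] by auto
  then have "y < 2 ^ n"
    unfolding y_def using assms(4,5) by (intro foldl_flip_less_pow2) auto
  then have "p_path p (path y (ks ! j # ks ! Suc j # post)) = - p_path p (path y (ks ! Suc j # ks ! j # post))"
    using assms(5,6) ne by (intro unital_cstar_algebra.p_path_swap_first_steps[OF assms(1,2)]) auto
  then show "p_path p (path x ks) = - p_path p (path x (swap_at j ks))"
    by (subst ks, subst swapped) (simp add: path_append p_path_append y_def)
qed

end
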